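(* Let $\pi\colon (X,T)\to (Y,S)$ be a proximal extension between minimal systems, let $\ell\geq 1$, and let $R\subset\mathbb N$ be a set of $\ell$-recurrence for $(Y,S)$. Then $R$ is a set of $\ell$-recurrence for $(X,T)$.
   Context: A system is a compact metric space with a homeomorphism; minimal means no proper nonempty closed invariant subset. A factor map is a continuous surjection intertwining the maps. Points $x,x'$ are proximal if $\inf_{n\in\mathbb N}d(T^nx,T^nx')=0$; $\pi$ is a proximal extension if each fiber $\pi^{-1}(\{y\})$ consists of pairwise proximal points. $R$ is a set of $\ell$-recurrence for a minimal system $(X,T)$ if for every nonempty open $U\subset X$ there is $n\in R$ with $U\cap T^{-n}U\cap\dots\cap T^{-\ell n}U\ne\emptyset$. *)

theory Defs
  imports "HOL-Analysis.Analysis"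
begin

definition tds :: "'a::metric_space set \<Rightarrow> ('a \<Rightarrow> 'a) \<Rightarrow> bool" where
  "tds X T \<longleftrightarrow> compact X \<and> X \<noteq> {} \<and> (\<exists>T'. homeomorphism X X T T')"

definition minimal_system :: "'a::metric_space set \<Rightarrow> ('a \<Rightarrow> 'a) \<Rightarrow> bool" where
  "minimal_system X T \<longleftrightarrow> tds X T \<and>
     (\<forall>A. A \<subseteq> X \<longrightarrow> closed A \<longrightarrow> A \<noteq> {} \<longrightarrow> T ` A \<subseteq> A \<longrightarrow> A = X)"

definition factor_map :: "'a::metric_space set \<Rightarrow> ('a \<Rightarrow> 'a) \<Rightarrow> 'b::metric_space set \<Rightarrow> ('b \<Rightarrow> 'b) \<Rightarrow> ('a \<Rightarrow> 'b) \<Rightarrow> bool" where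
  "factor_map X T Y S \<pi> \<longleftrightarrow> tds X T \<and> tds Y S \<and> continuous_on X \<pi> \<and> \<pi> ` X = Y \<and>
     (\<forall>x\<in>X. \<pi> (T x) = S (\<pi> x))"

definition proximal :: "('a::metric_space \<Rightarrow> 'a) \<Rightarrow> 'a \<Rightarrow> 'a \<Rightarrow> bool" where
  "proximal T x x' \<longleftrightarrow> (INF n::nat. dist ((T ^^ n) x) ((T ^^ n) x')) = 0"

definition proximal_extension :: "'a::metric_space set \<Rightarrow> ('a \<Rightarrow> 'a) \<Rightarrow> 'b::metric_space set \<Rightarrow> ('b \<Rightarrow> 'b) \<Rightarrow> ('a \<Rightarrow> 'b) \<Rightarrow> bool" where
  "proximal_extension X T Y S \<pi> \<longleftrightarrow> factor_map X T Y S \<pi> \<and>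
     (\<forall>x\<in>X. \<forall>x'\<in>X. \<pi> x = \<pi> x' \<longrightarrow> proximal T x x')"

definition recurrence_set :: "nat \<Rightarrow> nat set \<Rightarrow> 'a::metric_space set \<Rightarrow> ('a \<Rightarrow> 'a) \<Rightarrow> bool" where
  "recurrence_set l R X T \<longleftrightarrow>
     (\<forall>U. openin (top_of_set X) U \<longrightarrow> U \<noteq> {} \<longrightarrow>
        (\<exists>n\<in>R. \<exists>x\<in>X. \<forall>j\<in>{0..l}. (T ^^ (j * n)) x \<in> U))"

end

theory Submission
  imports Defs
begin

(*
  Pick y in Y.  Applying recurrence to smaller and smaller balls
  around y, lifting the recurrent points to X and passing to a convergent subsequence, we
  obtain points a 0, ..., a l in the fibre over y that are "approachable": for every
  eps > 0 some n in R and z in X satisfy dist (T^(jn) z) (a j) < eps for all j <= l.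
  Pairwise proximality of the fibre upgrades, by induction and compactness, to
  simultaneous proximality: some iterate T^m brings all a j close to T^m (a 0).  Moving
  the approaching point z along by T^m yields a point whose first l returns along n stay
  delta-close to it ("approximate recurrence").  Finally, in a minimal system finitely
  many iterates T^m carry every point into a given ball, which turns approximate
  recurrence into recurrence for every nonempty open set.
*)

lemma funpow_commute_apply: "(f ^^ a) ((f ^^ b) x) = (f ^^ b) ((f ^^ a) x)"
  by (metis add.commute comp_apply funpow_add)

lemma proximal_iterate_close:
  assumes "proximal T x x'" and "\<epsilon> > 0"
  shows "\<exists>q. dist ((T ^^ q) x) ((T ^^ q) x') < \<epsilon>"
proof -
  have "(INF n. dist ((T ^^ n) x) ((T ^^ n) x')) < \<epsilon>"
    using assms unfolding proximal_def by simp
  from cInf_lessD[OF _ this] show ?thesis by auto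
qed

lemma LIMSEQ_if_dist_less_inverse:
  fixes f :: "nat \<Rightarrow> 'a::metric_space"
  assumes "\<And>i. dist (f i) y < inverse (real (Suc i))"
  shows "f \<longlonglongrightarrow> y"
proof -
  have "norm (dist (f i) y) \<le> inverse (real (Suc i))" for i
    using assms[of i] by simp
  then have "(\<lambda>i. dist (f i) y) \<longlonglongrightarrow> 0"
    by (intro Lim_null_comparison[OF always_eventually LIMSEQ_inverse_real_of_nat]) simp
  then show ?thesis by (rule tendsto_dist_iff[THEN iffD2])
qed

lemma compact_tuple_convergent_subseq:
  fixes f :: "nat \<Rightarrow> nat \<Rightarrow> 'a::metric_space"
  assumes X: "compact X" and f: "\<And>i j. j \<le> k \<Longrightarrow> f i j \<in> X"
  shows "\<exists>r a. strict_mono r \<and> (\<forall>j\<le>k. a j \<in> X \<and> (\<lambda>i. f (r i) j) \<longlonglongrightarrow> a j)"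
  using f
proof (induction k)
  case 0
  then have "\<forall>i. f i 0 \<in> X" by simp
  from seq_compactE[OF compact_imp_seq_compact[OF X] this]
  obtain b r where "b \<in> X" "strict_mono r" "((\<lambda>i. f i 0) \<circ> r) \<longlonglongrightarrow> b" by blast
  then show ?case by (intro exI[of _ r] exI[of _ "\<lambda>_. b"]) (auto simp: comp_def)
next
  case (Suc k)
  then obtain r a where r: "strict_mono r" and a: "\<forall>j\<le>k. a j \<in> X \<and> (\<lambda>i. f (r i) j) \<longlonglongrightarrow> a j"
    by auto
  have "\<forall>i. f (r i) (Suc k) \<in> X" using Suc.prems by auto
  from seq_compactE[OF compact_imp_seq_compact[OF X] this]
  obtain b r' where b: "b \<in> X" and r': "strict_mono r'"
    and lim: "((\<lambda>i. f (r i) (Suc k)) \<circ> r') \<longlonglongrightarrow> b" by blast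
  have "a j \<in> X \<and> (\<lambda>i. f (r (r' i)) j) \<longlonglongrightarrow> a j" if "j \<le> k" for j
    using a that LIMSEQ_subseq_LIMSEQ[OF _ r', of "\<lambda>i. f (r i) j"] by (auto simp: comp_def)
  then have "\<forall>j\<le>Suc k. (a(Suc k := b)) j \<in> X \<and> (\<lambda>i. f ((r \<circ> r') i) j) \<longlonglongrightarrow> (a(Suc k := b)) j"
    using b lim by (auto simp: comp_def le_Suc_eq)
  moreover have "strict_mono (r \<circ> r')" using r r' by (simp add: strict_mono_def)
  ultimately show ?case by blast
qed

definition approx_recurrence_set :: "nat \<Rightarrow> nat set \<Rightarrow> 'a::metric_space set \<Rightarrow> ('a \<Rightarrow> 'a) \<Rightarrow> bool" where
  "approx_recurrence_set l R X T \<longleftrightarrow>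
     (\<forall>\<delta>>0. \<exists>n\<in>R. \<exists>z\<in>X. \<forall>j\<le>l. dist ((T ^^ (j * n)) z) z < \<delta>)"

definition approachable :: "nat \<Rightarrow> nat set \<Rightarrow> 'a::metric_space set \<Rightarrow> ('a \<Rightarrow> 'a) \<Rightarrow> (nat \<Rightarrow> 'a) \<Rightarrow> bool" where
  "approachable l R X T a \<longleftrightarrow>
     (\<forall>\<epsilon>>0. \<exists>n\<in>R. \<exists>z\<in>X. \<forall>j\<le>l. dist ((T ^^ (j * n)) z) (a j) < \<epsilon>)"

definition simultaneously_proximal :: "('a::metric_space \<Rightarrow> 'a) \<Rightarrow> nat \<Rightarrow> (nat \<Rightarrow> 'a) \<Rightarrow> bool" where
  "simultaneously_proximal T k a \<longleftrightarrow>
     (\<forall>\<epsilon>>0. \<exists>m. \<forall>j\<le>k. dist ((T ^^ m) (a j)) ((T ^^ m) (a 0)) < \<epsilon>)"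

locale compact_system =
  fixes X :: "'a::metric_space set" and T :: "'a \<Rightarrow> 'a"
  assumes compact_space: "compact X"
    and maps_into: "T ` X \<subseteq> X"
    and continuous: "continuous_on X T"
begin

lemma iterate_in: "x \<in> X \<Longrightarrow> (T ^^ n) x \<in> X"
  using maps_into by (induction n) auto

lemma continuous_on_iterate: "continuous_on X (T ^^ n)"
proof (induction n)
  case (Suc n)
  have "(T ^^ n) ` X \<subseteq> X" using iterate_in by blast
  with Suc have "continuous_on X (T \<circ> (T ^^ n))"
    by (metis continuous_on_compose continuous_on_subset[OF continuous])
  then show ?case by simp
qed (simp add: continuous_on_id)

lemma uniformly_equicontinuous_iterates:
  assumes "finite M" and "\<epsilon> > 0"
  shows "\<exists>\<delta>>0. \<forall>m\<in>M. \<forall>u\<in>X. \<forall>v\<in>X. dist u v < \<delta> \<longrightarrow> dist ((T ^^ m) u) ((T ^^ m) v) < \<epsilon>"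
  using assms(1)
proof (induction M rule: finite_induct)
  case empty
  show ?case by (intro exI[of _ 1]) simp
next
  case (insert m M)
  then obtain \<delta>\<^sub>1 where \<delta>\<^sub>1: "\<delta>\<^sub>1 > 0"
    "\<forall>m\<in>M. \<forall>u\<in>X. \<forall>v\<in>X. dist u v < \<delta>\<^sub>1 \<longrightarrow> dist ((T ^^ m) u) ((T ^^ m) v) < \<epsilon>"
    by blast
  have "uniformly_continuous_on X (T ^^ m)"
    by (rule compact_uniformly_continuous[OF continuous_on_iterate compact_space])
  then obtain \<delta>\<^sub>2 where \<delta>\<^sub>2: "\<delta>\<^sub>2 > 0"
    "\<forall>u\<in>X. \<forall>v\<in>X. dist v u < \<delta>\<^sub>2 \<longrightarrow> dist ((T ^^ m) v) ((T ^^ m) u) < \<epsilon>"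
    using assms(2) unfolding uniformly_continuous_on_def by blast
  show ?case
    by (rule exI[of _ "min \<delta>\<^sub>1 \<delta>\<^sub>2"]) (use \<delta>\<^sub>1 \<delta>\<^sub>2 in \<open>auto simp: dist_commute\<close>)
qed

lemma uniformly_continuous_iterate:
  assumes "\<epsilon> > 0"
  shows "\<exists>\<delta>>0. \<forall>u\<in>X. \<forall>v\<in>X. dist u v < \<delta> \<longrightarrow> dist ((T ^^ m) u) ((T ^^ m) v) < \<epsilon>"
  using uniformly_equicontinuous_iterates[of "{m}"] assms by simp

end

lemma tds_compact_system:
  assumes "tds X T"
  shows "compact_system X T"
proof -
  obtain T' where "homeomorphism X X T T'" using assms unfolding tds_def by blast
  then show ?thesis
    using assms unfolding tds_def homeomorphism_def compact_system_def by simp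
qed

section \<open>Minimal systems: from approximate recurrence to recurrence\<close>

text \<open>Every orbit of a minimal system is dense: its closure is a closed invariant set.\<close>
lemma minimal_orbit_dense:
  assumes min: "minimal_system X T" and z: "z \<in> X" and x0: "x0 \<in> X" and \<epsilon>: "\<epsilon> > 0"
  shows "\<exists>m. dist ((T ^^ m) z) x0 < \<epsilon>"
proof -
  interpret compact_system X T
    using min unfolding minimal_system_def by (simp add: tds_compact_system)
  define Orb where "Orb = range (\<lambda>m. (T ^^ m) z)"
  have Orb_sub: "closure Orb \<subseteq> X"
    using iterate_in[OF z] compact_imp_closed[OF compact_space]
    by (intro closure_minimal) (auto simp: Orb_def)
  have "T ` Orb \<subseteq> Orb"
    unfolding Orb_def by (auto intro: range_eqI[of _ _ "Suc _"])
  then have "T ` closure Orb \<subseteq> closure Orb"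
    by (intro image_closure_subset continuous_on_subset[OF continuous Orb_sub])
      (auto intro: closure_subset[THEN subsetD])
  moreover have "closure Orb \<noteq> {}" unfolding Orb_def by simp
  ultimately have "closure Orb = X"
    using min Orb_sub unfolding minimal_system_def by blast
  with x0 have "x0 \<in> closure Orb" by simp
  with \<epsilon> obtain u where "u \<in> Orb" "dist u x0 < \<epsilon>"
    unfolding closure_approachable by blast
  then show ?thesis unfolding Orb_def by blast
qed

text \<open>By compactness, finitely many return times suffice to bring every point of a minimal
  system into a given ball.\<close>
lemma minimal_finite_return_times:
  assumes min: "minimal_system X T" and x0: "x0 \<in> X" and \<epsilon>: "\<epsilon> > 0"
  shows "\<exists>M. finite M \<and> (\<forall>z\<in>X. \<exists>m\<in>M. dist ((T ^^ m) z) x0 < \<epsilon>)"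
proof -
  interpret compact_system X T
    using min unfolding minimal_system_def by (simp add: tds_compact_system)
  define V where "V m = X \<inter> (T ^^ m) -` ball x0 \<epsilon>" for m
  have "\<forall>c\<in>range V. openin (top_of_set X) c"
    unfolding V_def by (auto intro: continuous_openin_preimage_gen continuous_on_iterate)
  moreover have "X \<subseteq> \<Union>(range V)"
    using minimal_orbit_dense[OF min _ x0 \<epsilon>] by (fastforce simp: V_def dist_commute)
  ultimately obtain D where "D \<subseteq> range V" "finite D" "X \<subseteq> \<Union>D"
    using compact_space unfolding compact_eq_openin_cover by meson
  then obtain M where "finite M" "X \<subseteq> \<Union>(V ` M)"
    by (metis finite_subset_image subset_UNIV)
  then show ?thesis by (intro exI[of _ M]) (fastforce simp: V_def dist_commute)
qed

text \<open>In a minimal system approximate recurrence implies recurrence: a point z returning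
  \<delta>-close to itself is moved into the target ball by one of finitely many iterates
  T^m, which keeps the returns close by equicontinuity.\<close>
lemma recurrence_set_if_approx_recurrence_set:
  assumes min: "minimal_system X T" and approx: "approx_recurrence_set l R X T"
  shows "recurrence_set l R X T"
  unfolding recurrence_set_def
proof (intro allI impI)
  interpret compact_system X T
    using min unfolding minimal_system_def by (simp add: tds_compact_system)
  fix U assume U: "openin (top_of_set X) U" "U \<noteq> {}"
  then obtain x0 e where x0: "x0 \<in> U" and e: "e > 0"
    and ball_U: "\<And>x. x \<in> X \<Longrightarrow> dist x x0 < e \<Longrightarrow> x \<in> U"
    unfolding openin_euclidean_subtopology_iff by blast
  have x0X: "x0 \<in> X" using x0 U(1) openin_imp_subset by blast
  have e2: "e / 2 > 0" using e by simp
  obtain M where M: "finite M" and return: "\<forall>z\<in>X. \<exists>m\<in>M. dist ((T ^^ m) z) x0 < e / 2"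
    using minimal_finite_return_times[OF min x0X e2] by blast
  obtain \<delta> where \<delta>: "\<delta> > 0"
    and equicont: "\<forall>m\<in>M. \<forall>u\<in>X. \<forall>v\<in>X. dist u v < \<delta> \<longrightarrow> dist ((T ^^ m) u) ((T ^^ m) v) < e / 2"
    using uniformly_equicontinuous_iterates[OF M e2] by blast
  obtain n z where n: "n \<in> R" and z: "z \<in> X" and returns: "\<forall>j\<le>l. dist ((T ^^ (j * n)) z) z < \<delta>"
    using approx \<delta> unfolding approx_recurrence_set_def by blast
  obtain m where m: "m \<in> M" "dist ((T ^^ m) z) x0 < e / 2" using return z by blast
  have "(T ^^ (j * n)) ((T ^^ m) z) \<in> U" if "j \<le> l" for j
  proof (rule ball_U)
    have "dist ((T ^^ m) ((T ^^ (j * n)) z)) ((T ^^ m) z) < e / 2"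
      using equicont m(1) returns that z iterate_in[OF z, of "j * n"] by simp
    with m(2) have "dist ((T ^^ m) ((T ^^ (j * n)) z)) x0 < e"
      using dist_triangle[of "(T ^^ m) ((T ^^ (j * n)) z)" x0 "(T ^^ m) z"] by linarith
    then show "dist ((T ^^ (j * n)) ((T ^^ m) z)) x0 < e"
      by (simp add: funpow_commute_apply)
  qed (rule iterate_in[OF iterate_in[OF z]])
  then show "\<exists>n\<in>R. \<exists>x\<in>X. \<forall>j\<in>{0..l}. (T ^^ (j * n)) x \<in> U"
    using iterate_in[OF z, of m] by (auto intro!: bexI[OF _ n] bexI[of _ "(T ^^ m) z"])
qed

section \<open>Approachable, simultaneously proximal tuples give approximate recurrence\<close>

text \<open>If z approaches the tuple a and T^m brings all a j close to T^m (a 0), then the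
  returns of T^m z along n stay close to T^m z.\<close>
lemma (in compact_system) approx_recurrence_set_if_proximal_approachable:
  assumes a: "\<forall>j\<le>l. a j \<in> X"
    and appr: "approachable l R X T a" and prox: "simultaneously_proximal T l a"
  shows "approx_recurrence_set l R X T"
  unfolding approx_recurrence_set_def
proof (intro allI impI)
  fix \<delta> :: real assume \<delta>: "\<delta> > 0"
  obtain m where m: "\<forall>j\<le>l. dist ((T ^^ m) (a j)) ((T ^^ m) (a 0)) < \<delta> / 3"
    using prox \<delta> unfolding simultaneously_proximal_def by (meson divide_pos_pos zero_less_numeral)
  obtain \<eta> where \<eta>: "\<eta> > 0"
    and cont: "\<forall>u\<in>X. \<forall>v\<in>X. dist u v < \<eta> \<longrightarrow> dist ((T ^^ m) u) ((T ^^ m) v) < \<delta> / 3"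
    using uniformly_continuous_iterate[of "\<delta> / 3" m] \<delta> by auto
  obtain n z where n: "n \<in> R" and z: "z \<in> X" and near: "\<forall>j\<le>l. dist ((T ^^ (j * n)) z) (a j) < \<eta>"
    using appr \<eta> unfolding approachable_def by blast
  have "dist ((T ^^ (j * n)) ((T ^^ m) z)) ((T ^^ m) z) < \<delta>" if j: "j \<le> l" for j
  proof -
    have "dist ((T ^^ m) ((T ^^ (j * n)) z)) ((T ^^ m) (a j)) < \<delta> / 3"
      using cont a near j iterate_in[OF z, of "j * n"] by simp
    moreover have "dist ((T ^^ m) z) ((T ^^ m) (a 0)) < \<delta> / 3"
      using cont a near z by (metis funpow_0 mult_0 le0)
    moreover have "dist ((T ^^ m) (a j)) ((T ^^ m) (a 0)) < \<delta> / 3" using m j by blast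
    ultimately show ?thesis
      using dist_triangle[of "(T ^^ m) ((T ^^ (j * n)) z)" "(T ^^ m) z" "(T ^^ m) (a j)"]
        dist_triangle2[of "(T ^^ m) (a j)" "(T ^^ m) z" "(T ^^ m) (a 0)"]
      by (simp add: funpow_commute_apply)
  qed
  then show "\<exists>n\<in>R. \<exists>z\<in>X. \<forall>j\<le>l. dist ((T ^^ (j * n)) z) z < \<delta>"
    using n iterate_in[OF z, of m] by blast
qed

lemma approachable_if_limit:
  assumes "\<And>i. n i \<in> R" "\<And>i. z i \<in> X"
    and lim: "\<forall>j\<le>l. (\<lambda>i. (T ^^ (j * n i)) (z i)) \<longlonglongrightarrow> a j"
  shows "approachable l R X T a"
  unfolding approachable_def
proof (intro allI impI)
  fix \<epsilon> :: real assume "\<epsilon> > 0"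
  with lim have "\<forall>j\<in>{..l}. eventually (\<lambda>i. dist ((T ^^ (j * n i)) (z i)) (a j) < \<epsilon>) sequentially"
    by (auto simp: tendsto_iff)
  then have "eventually (\<lambda>i. \<forall>j\<in>{..l}. dist ((T ^^ (j * n i)) (z i)) (a j) < \<epsilon>) sequentially"
    by (rule eventually_ball_finite[rotated]) simp
  then obtain i where "\<forall>j\<le>l. dist ((T ^^ (j * n i)) (z i)) (a j) < \<epsilon>"
    unfolding eventually_sequentially by auto
  then show "\<exists>n\<in>R. \<exists>z\<in>X. \<forall>j\<le>l. dist ((T ^^ (j * n)) z) (a j) < \<epsilon>"
    using assms(1,2) by blast
qed

locale semiconjugacy = compact_system X T
  for X :: "'a::metric_space set" and T :: "'a \<Rightarrow> 'a" +
  fixes Y :: "'b::metric_space set" and S :: "'b \<Rightarrow> 'b" and \<pi> :: "'a \<Rightarrow> 'b"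
  assumes continuous_factor: "continuous_on X \<pi>"
    and onto: "\<pi> ` X = Y"
    and intertwines: "\<forall>x\<in>X. \<pi> (T x) = S (\<pi> x)"
begin

lemma factor_iterate: "x \<in> X \<Longrightarrow> \<pi> ((T ^^ n) x) = (S ^^ n) (\<pi> x)"
  by (induction n) (simp_all add: intertwines iterate_in)

lemma factor_limit: "(\<And>i. u i \<in> X) \<Longrightarrow> u \<longlonglongrightarrow> b \<Longrightarrow> b \<in> X \<Longrightarrow> (\<lambda>i. \<pi> (u i)) \<longlonglongrightarrow> \<pi> b"
  by (rule continuous_on_tendsto_compose[OF continuous_factor]) auto

lemma fiber_pair_convergent_subseq:
  fixes u v :: "nat \<Rightarrow> 'a"
  assumes uv: "\<And>i. u i \<in> X" "\<And>i. v i \<in> X" and fiber: "\<And>i. \<pi> (u i) = \<pi> (v i)"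
  obtains r b b' where "strict_mono r" "b \<in> X" "b' \<in> X" "\<pi> b = \<pi> b'"
    "(u \<circ> r) \<longlonglongrightarrow> b" "(v \<circ> r) \<longlonglongrightarrow> b'"
proof -
  have "seq_compact (X \<times> X)"
    by (intro compact_imp_seq_compact compact_Times compact_space)
  from seq_compactE[OF this, of "\<lambda>i. (u i, v i)"]
  obtain p r where p: "p \<in> X \<times> X" and r: "strict_mono r"
    and lim: "((\<lambda>i. (u i, v i)) \<circ> r) \<longlonglongrightarrow> p" using uv by blast
  have lim_u: "(u \<circ> r) \<longlonglongrightarrow> fst p" and lim_v: "(v \<circ> r) \<longlonglongrightarrow> snd p"
    using tendsto_fst[OF lim] tendsto_snd[OF lim] by (simp_all add: comp_def)
  have "(\<lambda>i. \<pi> (u (r i))) \<longlonglongrightarrow> \<pi> (fst p)" "(\<lambda>i. \<pi> (u (r i))) \<longlonglongrightarrow> \<pi> (snd p)"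
    using factor_limit[OF _ lim_u] factor_limit[OF _ lim_v] p uv fiber by (auto simp: comp_def)
  then have "\<pi> (fst p) = \<pi> (snd p)" by (rule LIMSEQ_unique)
  with that r p lim_u lim_v show thesis by (auto simp: mem_Times_iff)
qed

section \<open>Lifting recurrence to an approachable tuple in one fibre\<close>

text \<open>Recurrence of the factor at scale 1/(i+1) around y, lifted to X, gives patterns in X
  whose images approach y; a convergent subsequence yields an approachable tuple over y.\<close>
lemma approachable_tuple_in_fiber:
  assumes rec: "recurrence_set l R Y S" and y: "y \<in> Y"
  shows "\<exists>a. (\<forall>j\<le>l. a j \<in> X \<and> \<pi> (a j) = y) \<and> approachable l R X T a"
proof -
  have "\<exists>n z. n \<in> R \<and> z \<in> X \<and>
      (\<forall>j\<le>l. dist (\<pi> ((T ^^ (j * n)) z)) y < inverse (real (Suc i)))" for i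
  proof -
    have "openin (top_of_set Y) (Y \<inter> ball y (inverse (real (Suc i))))"
      "Y \<inter> ball y (inverse (real (Suc i))) \<noteq> {}"
      using y by auto
    from rec[unfolded recurrence_set_def, rule_format, OF this]
    obtain n w where "n \<in> R" "w \<in> Y"
      "\<forall>j\<in>{0..l}. (S ^^ (j * n)) w \<in> Y \<inter> ball y (inverse (real (Suc i)))"
      by blast
    moreover obtain z where "z \<in> X" "w = \<pi> z" using \<open>w \<in> Y\<close> onto by blast
    ultimately show ?thesis
      by (intro exI[of _ n] exI[of _ z]) (auto simp: factor_iterate dist_commute)
  qed
  then obtain n z where nz: "\<And>i. n i \<in> R" "\<And>i. z i \<in> X"
    and close: "\<And>i j. j \<le> l \<Longrightarrow> dist (\<pi> ((T ^^ (j * n i)) (z i))) y < inverse (real (Suc i))"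
    by metis
  have in_X: "\<And>i j. (T ^^ (j * n i)) (z i) \<in> X" using iterate_in nz(2) by simp
  obtain r a where r: "strict_mono r"
    and lim: "\<forall>j\<le>l. a j \<in> X \<and> (\<lambda>i. (T ^^ (j * n (r i))) (z (r i))) \<longlonglongrightarrow> a j"
    using compact_tuple_convergent_subseq[OF compact_space, where f="\<lambda>i j. (T ^^ (j * n i)) (z i)" and k=l]
      in_X by blast
  have "\<pi> (a j) = y" if j: "j \<le> l" for j
  proof -
    have lim_a: "(\<lambda>i. \<pi> ((T ^^ (j * n (r i))) (z (r i)))) \<longlonglongrightarrow> \<pi> (a j)"
      using factor_limit[of "\<lambda>i. (T ^^ (j * n (r i))) (z (r i))"] in_X lim j by blast
    have "(\<lambda>i. \<pi> ((T ^^ (j * n i)) (z i))) \<longlonglongrightarrow> y"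
      using close[OF j] by (rule LIMSEQ_if_dist_less_inverse)
    from LIMSEQ_subseq_LIMSEQ[OF this r]
    have lim_y: "(\<lambda>i. \<pi> ((T ^^ (j * n (r i))) (z (r i)))) \<longlonglongrightarrow> y" by (simp add: comp_def)
    show ?thesis using LIMSEQ_unique[OF lim_a lim_y] .
  qed
  moreover have "approachable l R X T a"
    by (rule approachable_if_limit[of "n \<circ> r" _ "z \<circ> r"]) (use nz lim in auto)
  ultimately show ?thesis using lim by blast
qed

section \<open>Fibres of a proximal extension are simultaneously proximal\<close>

text \<open>If a 0, ..., a k are simultaneously proximal and a (k+1) lies in their fibre, then
  along iterates bringing a 0, ..., a k together, the pair (a 0, a (k+1)) accumulates at a
  pair b, b' in a common fibre, which the orbit shadows at every scale.\<close>
lemma fiber_pair_shadowed: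
  assumes fiber: "\<forall>j\<le>Suc k. a j \<in> X \<and> \<pi> (a j) = \<pi> (a 0)"
    and sp: "simultaneously_proximal T k a"
  obtains b b' where "b \<in> X" "b' \<in> X" "\<pi> b = \<pi> b'"
    "\<And>\<eta>. \<eta> > 0 \<Longrightarrow> \<exists>s. (\<forall>j\<le>k. dist ((T ^^ s) (a j)) b < \<eta>) \<and> dist ((T ^^ s) (a (Suc k))) b' < \<eta>"
proof -
  have a0: "a 0 \<in> X" and ak: "a (Suc k) \<in> X" and fiber_k: "\<pi> (a (Suc k)) = \<pi> (a 0)"
    using fiber by blast+
  have "\<exists>m. \<forall>j\<le>k. dist ((T ^^ m) (a j)) ((T ^^ m) (a 0)) < inverse (real (Suc i))" for i
    using sp unfolding simultaneously_proximal_def by simp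
  then obtain m where m: "\<And>i j. j \<le> k \<Longrightarrow> dist ((T ^^ m i) (a j)) ((T ^^ m i) (a 0)) < inverse (real (Suc i))"
    by metis
  obtain r b b' where r: "strict_mono r" and b: "b \<in> X" "b' \<in> X" "\<pi> b = \<pi> b'"
    and lim: "(\<lambda>i. (T ^^ m (r i)) (a 0)) \<longlonglongrightarrow> b" "(\<lambda>i. (T ^^ m (r i)) (a (Suc k))) \<longlonglongrightarrow> b'"
    using fiber_pair_convergent_subseq[of "\<lambda>i. (T ^^ m i) (a 0)" "\<lambda>i. (T ^^ m i) (a (Suc k))"]
      iterate_in a0 ak fiber_k by (auto simp: factor_iterate comp_def)
  have "\<exists>s. (\<forall>j\<le>k. dist ((T ^^ s) (a j)) b < \<eta>) \<and> dist ((T ^^ s) (a (Suc k))) b' < \<eta>"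
    if \<eta>: "\<eta> > 0" for \<eta>
  proof -
    have "eventually (\<lambda>i. inverse (real (Suc (r i))) < \<eta> / 2) sequentially"
      using LIMSEQ_subseq_LIMSEQ[OF LIMSEQ_inverse_real_of_nat r] \<eta>
      by (auto simp: comp_def dest: order_tendstoD(2)[of _ 0 _ "\<eta> / 2"])
    moreover have "eventually (\<lambda>i. dist ((T ^^ m (r i)) (a 0)) b < \<eta> / 2) sequentially"
      "eventually (\<lambda>i. dist ((T ^^ m (r i)) (a (Suc k))) b' < \<eta>) sequentially"
      using lim \<eta> half_gt_zero[OF \<eta>] unfolding tendsto_iff by blast+
    ultimately have "eventually (\<lambda>i. inverse (real (Suc (r i))) < \<eta> / 2 \<and>
        dist ((T ^^ m (r i)) (a 0)) b < \<eta> / 2 \<and> dist ((T ^^ m (r i)) (a (Suc k))) b' < \<eta>) sequentially"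
      by (intro eventually_conj)
    then obtain i where i: "inverse (real (Suc (r i))) < \<eta> / 2"
      "dist ((T ^^ m (r i)) (a 0)) b < \<eta> / 2" "dist ((T ^^ m (r i)) (a (Suc k))) b' < \<eta>"
      unfolding eventually_sequentially by blast
    have "dist ((T ^^ m (r i)) (a j)) b < \<eta>" if "j \<le> k" for j
      using m[OF that, of "r i"] i(1,2)
        dist_triangle[of "(T ^^ m (r i)) (a j)" b "(T ^^ m (r i)) (a 0)"] by linarith
    with i(3) show ?thesis by blast
  qed
  with that b show thesis by blast
qed

text \<open>Induction step: iterate the shadowed fibre pair b, b' together (they are proximal),
  and transfer the closeness back to the orbit by uniform continuity.\<close>
lemma simultaneously_proximal_Suc:
  assumes prox: "\<forall>x\<in>X. \<forall>x'\<in>X. \<pi> x = \<pi> x' \<longrightarrow> proximal T x x'"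
    and fiber: "\<forall>j\<le>Suc k. a j \<in> X \<and> \<pi> (a j) = \<pi> (a 0)"
    and sp: "simultaneously_proximal T k a"
  shows "simultaneously_proximal T (Suc k) a"
  unfolding simultaneously_proximal_def
proof (intro allI impI)
  fix \<epsilon> :: real assume \<epsilon>: "\<epsilon> > 0"
  obtain b b' where b: "b \<in> X" "b' \<in> X" "\<pi> b = \<pi> b'"
    and shadow: "\<And>\<eta>. \<eta> > 0 \<Longrightarrow>
      \<exists>s. (\<forall>j\<le>k. dist ((T ^^ s) (a j)) b < \<eta>) \<and> dist ((T ^^ s) (a (Suc k))) b' < \<eta>"
    using fiber_pair_shadowed[OF fiber sp] by blast
  obtain q where q: "dist ((T ^^ q) b) ((T ^^ q) b') < \<epsilon> / 3"
    using proximal_iterate_close prox b \<epsilon> by (metis divide_pos_pos zero_less_numeral)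
  obtain \<eta> where \<eta>: "\<eta> > 0"
    and cont: "\<forall>u\<in>X. \<forall>v\<in>X. dist u v < \<eta> \<longrightarrow> dist ((T ^^ q) u) ((T ^^ q) v) < \<epsilon> / 3"
    using uniformly_continuous_iterate[of "\<epsilon> / 3" q] \<epsilon> by auto
  obtain s where s: "\<forall>j\<le>k. dist ((T ^^ s) (a j)) b < \<eta>" "dist ((T ^^ s) (a (Suc k))) b' < \<eta>"
    using shadow[OF \<eta>] by blast
  define t where "t = q + s"
  have near_b: "dist ((T ^^ t) (a j)) ((T ^^ q) b) < \<epsilon> / 3" if "j \<le> k" for j
    using cont b fiber that s(1) iterate_in unfolding t_def funpow_add by simp
  have near_b': "dist ((T ^^ t) (a (Suc k))) ((T ^^ q) b') < \<epsilon> / 3"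
    using cont b fiber s(2) iterate_in unfolding t_def funpow_add by simp
  have "dist ((T ^^ t) (a j)) ((T ^^ t) (a 0)) < \<epsilon>" if j: "j \<le> Suc k" for j
  proof (cases "j \<le> k")
    case True
    then show ?thesis
      using near_b[OF True] near_b[of 0] \<epsilon>
        dist_triangle2[of "(T ^^ t) (a j)" "(T ^^ t) (a 0)" "(T ^^ q) b"] by simp
  next
    case False
    then have "j = Suc k" using j by simp
    have "dist ((T ^^ t) (a j)) ((T ^^ t) (a 0))
        \<le> dist ((T ^^ t) (a j)) ((T ^^ q) b') + dist ((T ^^ q) b') ((T ^^ q) b)
          + dist ((T ^^ q) b) ((T ^^ t) (a 0))"
      using dist_triangle[of "(T ^^ t) (a j)" "(T ^^ t) (a 0)" "(T ^^ q) b'"]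
        dist_triangle[of "(T ^^ q) b'" "(T ^^ t) (a 0)" "(T ^^ q) b"] by linarith
    moreover have "dist ((T ^^ q) b') ((T ^^ q) b) < \<epsilon> / 3"
      "dist ((T ^^ q) b) ((T ^^ t) (a 0)) < \<epsilon> / 3"
      using q near_b[of 0] by (simp_all add: dist_commute)
    ultimately show ?thesis using near_b' \<open>j = Suc k\<close> by simp
  qed
  then show "\<exists>t. \<forall>j\<le>Suc k. dist ((T ^^ t) (a j)) ((T ^^ t) (a 0)) < \<epsilon>" by blast
qed

lemma fiber_simultaneously_proximal:
  assumes prox: "\<forall>x\<in>X. \<forall>x'\<in>X. \<pi> x = \<pi> x' \<longrightarrow> proximal T x x'"
    and fiber: "\<forall>j\<le>k. a j \<in> X \<and> \<pi> (a j) = \<pi> (a 0)"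
  shows "simultaneously_proximal T k a"
  using fiber
proof (induction k)
  case 0
  show ?case unfolding simultaneously_proximal_def by auto
next
  case (Suc k)
  have "\<forall>j\<le>k. a j \<in> X \<and> \<pi> (a j) = \<pi> (a 0)" using Suc.prems le_SucI by blast
  then have "simultaneously_proximal T k a" by (rule Suc.IH)
  with Suc.prems show ?case by (rule simultaneously_proximal_Suc[OF prox])
qed

end

lemma factor_map_semiconjugacy:
  assumes "factor_map X T Y S \<pi>"
  shows "semiconjugacy X T Y S \<pi>"
proof -
  have "compact_system X T" using assms tds_compact_system unfolding factor_map_def by blast
  then show ?thesis
    using assms unfolding factor_map_def semiconjugacy_def semiconjugacy_axioms_def by simp
qed

theorem mainTheorem4:
  fixes X :: "'a::metric_space set" and T :: "'a \<Rightarrow> 'a"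
    and Y :: "'b::metric_space set" and S :: "'b \<Rightarrow> 'b"
    and \<pi> :: "'a \<Rightarrow> 'b" and l :: nat and R :: "nat set"
  assumes "minimal_system X T" and "minimal_system Y S"
    and "proximal_extension X T Y S \<pi>"
    and "l \<ge> 1"
    and "recurrence_set l R Y S"
  shows "recurrence_set l R X T"
proof -
  interpret semiconjugacy X T Y S \<pi>
    using assms(3) factor_map_semiconjugacy unfolding proximal_extension_def by blast
  have prox: "\<forall>x\<in>X. \<forall>x'\<in>X. \<pi> x = \<pi> x' \<longrightarrow> proximal T x x'"
    using assms(3) unfolding proximal_extension_def by blast
  obtain y where "y \<in> Y"
    using assms(2) unfolding minimal_system_def tds_def by blast
  then obtain a where fiber: "\<forall>j\<le>l. a j \<in> X \<and> \<pi> (a j) = y" and appr: "approachable l R X T a"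
    using approachable_tuple_in_fiber[OF assms(5)] by blast
  have "simultaneously_proximal T l a"
    using fiber_simultaneously_proximal[OF prox] fiber by simp
  then have "approx_recurrence_set l R X T"
    using approx_recurrence_set_if_proximal_approachable appr fiber by blast
  then show ?thesis
    using recurrence_set_if_approx_recurrence_set[OF assms(1)] by blast
qed

end
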